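(* Let $\vec B=(b_0,\dots,b_{N-1})$ be a binary digit vector with cumulative digit function $g$. Let $x\in(0,1)$ and write $x=\sum_{i=1}^\infty n_i N^{-i}$ with $n_i\in\{0,1,\dots,N-1\}$. Then $$F_{\vec B}(x)=\sum_{i=1}^\infty\Big(\prod_{k=1}^{i-1}b_{n_k}\Big)\frac{g(n_i)}{\|\vec B\|^i}.$$
   Context: A binary digit vector of length (scale factor) $N\ge3$ is $\vec B=(b_0,\dots,b_{N-1})\in\{0,1\}^N$ with $2\le\|\vec B\|:=\sum_i b_i\le N-1$; its digit set is $D=\{i:b_i=1\}$. With $\phi_d(x)=(x+d)/N$ for $d\in D$, let $\mu_{\vec B}$ be the unique Borel probability measure with $\mu_{\vec B}=\frac{1}{\|\vec B\|}\sum_{d\in D}\mu_{\vec B}\circ\phi_d^{-1}$, supported on the attractor $C_{\vec B}\subset[0,1]$. The CDF is $F_{\vec B}(x)=\mu_{\vec B}([0,x])$. The cumulative digit function is $g(0)=0$, $g(i)=\sum_{j=0}^{i-1}b_j$ for $1\le i\le N$. An empty product equals $1$. *)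

theory Defs
  imports "HOL-Probability.Probability"
begin

text \<open>A binary digit vector of length N is represented by b :: nat => nat,
  with b i \<in> {0,1} for i < N (values at i >= N are irrelevant).\<close>

definition digit_vector :: "nat \<Rightarrow> (nat \<Rightarrow> nat) \<Rightarrow> bool" where
  "digit_vector N b \<longleftrightarrow> 3 \<le> N \<and> (\<forall>i<N. b i \<in> {0,1})
     \<and> 2 \<le> (\<Sum>i<N. b i) \<and> (\<Sum>i<N. b i) \<le> N - 1"

definition digit_norm :: "nat \<Rightarrow> (nat \<Rightarrow> nat) \<Rightarrow> nat" where
  "digit_norm N b = (\<Sum>i<N. b i)"

definition digit_set :: "nat \<Rightarrow> (nat \<Rightarrow> nat) \<Rightarrow> nat set" where
  "digit_set N b = {i. i < N \<and> b i = 1}"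

definition cum_digit :: "(nat \<Rightarrow> nat) \<Rightarrow> nat \<Rightarrow> nat" where
  "cum_digit b i = (\<Sum>j<i. b j)"

definition phi :: "nat \<Rightarrow> nat \<Rightarrow> real \<Rightarrow> real" where
  "phi N d x = (x + real d) / real N"

definition self_similar_measure :: "nat \<Rightarrow> (nat \<Rightarrow> nat) \<Rightarrow> real measure \<Rightarrow> bool" where
  "self_similar_measure N b \<mu> \<longleftrightarrow> prob_space \<mu> \<and> sets \<mu> = sets borel \<and>
     (\<forall>A\<in>sets borel. measure \<mu> A =
        (1 / real (digit_norm N b)) * (\<Sum>d\<in>digit_set N b. measure \<mu> (phi N d -` A)))"

definition cdf_of :: "real measure \<Rightarrow> real \<Rightarrow> real" where
  "cdf_of \<mu> x = measure \<mu> {0..x}"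

end

theory Submission
  imports Defs
begin

(*
  Self-similarity gives the functional equation F((a + y) / N) = (g(a) + b_a F(y)) / ||B||
  for every digit a < N and y in [0,1]. Deriving it needs that mu lives on [0,1] and has no
  atom at 0. The first holds because the preimages of the complement of the t-neighbourhood
  of [0,1] lie in the complement of its Nt-neighbourhood, so the measure of these complements
  can only grow when t is scaled by N, while it tends to 0 as t grows; the second because
  mu{0} = b_0 mu{0} / ||B||. Applying the equation to the tails 0.n_(k+1) n_(k+2) ... of the
  expansion of x and unrolling it K times leaves the remainder
  b_(n_1) ... b_(n_K) F(t_K) / ||B||^K, which tends to 0 since ||B|| >= 2.
*)

locale binary_self_similar_measure =
  fixes N :: nat and b :: "nat \<Rightarrow> nat" and \<mu> :: "real measure"
  assumes binary_digits: "\<And>i. i < N \<Longrightarrow> b i \<in> {0, 1}"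
    and digit_norm_ge_2: "2 \<le> digit_norm N b"
    and self_similar: "self_similar_measure N b \<mu>"
begin

sublocale prob_space \<mu>
  using self_similar by (simp add: self_similar_measure_def)

lemma sets_eq_borel [simp]: "sets \<mu> = sets borel"
  using self_similar by (simp add: self_similar_measure_def)

lemma space_eq_UNIV [simp]: "space \<mu> = UNIV"
  using sets_eq_imp_space_eq[OF sets_eq_borel] by simp

lemma measure_self_similar:
  "A \<in> sets borel \<Longrightarrow>
    measure \<mu> A = (\<Sum>d\<in>digit_set N b. measure \<mu> (phi N d -` A)) / digit_norm N b"
  using self_similar by (simp add: self_similar_measure_def)

lemma finite_digit_set [simp]: "finite (digit_set N b)"
  by (simp add: digit_set_def)

lemma digit_set_less: "d \<in> digit_set N b \<Longrightarrow> d < N"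
  by (simp add: digit_set_def)

lemma digit_eq_of_bool: "a < N \<Longrightarrow> real (b a) = of_bool (a \<in> digit_set N b)"
  using binary_digits[of a] by (auto simp: digit_set_def)

lemma cum_digit_eq_card:
  assumes "a \<le> N"
  shows "cum_digit b a = card (digit_set N b \<inter> {..<a})"
proof -
  have "real (cum_digit b a) = (\<Sum>j<a. of_bool (j \<in> digit_set N b))"
    unfolding cum_digit_def of_nat_sum using assms by (intro sum.cong) (auto simp: digit_eq_of_bool)
  also have "\<dots> = card (digit_set N b \<inter> {..<a})"
    by (simp add: Int_commute)
  finally show ?thesis by linarith
qed

lemma digit_norm_eq_card: "digit_norm N b = card (digit_set N b)"
proof -
  have "digit_norm N b = cum_digit b N"
    by (simp add: digit_norm_def cum_digit_def)
  also have "\<dots> = card (digit_set N b \<inter> {..<N})"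
    by (simp add: cum_digit_eq_card)
  also have "digit_set N b \<inter> {..<N} = digit_set N b"
    using digit_set_less by blast
  finally show ?thesis .
qed

lemma N_ge_2: "2 \<le> N"
proof -
  have "card (digit_set N b) \<le> card {..<N}"
    using digit_set_less by (intro card_mono) auto
  then show ?thesis using digit_norm_ge_2 by (simp add: digit_norm_eq_card)
qed

lemma measurable_phi [measurable]: "phi N d \<in> borel_measurable borel"
  unfolding phi_def by measurable

lemma phi_preimage_exterior:
  fixes t :: real
  assumes "0 \<le> t" "d < N"
  shows "phi N d -` (- {-t..1 + t}) \<subseteq> - {-(N * t)..1 + N * t}"
proof -
  have "phi N d z \<in> {-t..1 + t}" if "z \<in> {-(N * t)..1 + N * t}" for z :: real
  proof -
    have "real d + 1 \<le> N" using assms(2) by linarith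
    then have "- (N * t) \<le> z + d \<and> z + d \<le> N * (1 + t)"
      using that assms(1) by (auto simp: algebra_simps)
    then show ?thesis using N_ge_2 by (simp add: phi_def field_simps)
  qed
  then show ?thesis by blast
qed

lemma measure_exterior_le:
  fixes t :: real
  assumes "0 \<le> t"
  shows "measure \<mu> (- {-t..1 + t}) \<le> measure \<mu> (- {-(N * t)..1 + N * t})"
proof -
  have "measure \<mu> (- {-t..1 + t}) =
      (\<Sum>d\<in>digit_set N b. measure \<mu> (phi N d -` (- {-t..1 + t}))) / digit_norm N b"
    by (rule measure_self_similar) simp
  also have "\<dots> \<le> (\<Sum>d\<in>digit_set N b. measure \<mu> (- {-(N * t)..1 + N * t})) / digit_norm N b"
    using phi_preimage_exterior[OF assms] digit_set_less
    by (intro divide_right_mono sum_mono finite_measure_mono) auto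
  also have "\<dots> = measure \<mu> (- {-(N * t)..1 + N * t})"
    using digit_norm_ge_2 by (auto simp: digit_norm_eq_card)
  finally show ?thesis .
qed

lemma exterior_null:
  fixes t :: real
  assumes "0 < t"
  shows "- {-t..1 + t} \<in> null_sets \<mu>"
proof -
  define E where "E k = - {-(real N ^ k * t)..1 + real N ^ k * t}" for k
  have "incseq (\<lambda>k. measure \<mu> (E k))"
    using measure_exterior_le assms by (intro incseq_SucI) (simp add: E_def mult.assoc)
  moreover have "(\<lambda>k. measure \<mu> (E k)) \<longlonglongrightarrow> 0"
  proof -
    have radius_mono: "real N ^ k * t \<le> real N ^ Suc k * t" for k
      using N_ge_2 assms by (simp add: mult_le_cancel_right1)
    have "{-(real N ^ k * t)..1 + real N ^ k * t} \<subseteq>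
        {-(real N ^ Suc k * t)..1 + real N ^ Suc k * t}" for k
      using radius_mono[of k] by simp
    then have "decseq E"
      unfolding E_def by (intro decseq_SucI compl_mono)
    moreover have "(\<Inter>k. E k) = {}"
    proof -
      have "\<exists>k. y \<notin> E k" for y
      proof -
        obtain k where "\<bar>y\<bar> / t < real N ^ k"
          using N_ge_2 real_arch_pow[of "real N" "\<bar>y\<bar> / t"] by auto
        then have "\<bar>y\<bar> < real N ^ k * t"
          using assms by (simp add: pos_divide_less_eq)
        then have "y \<notin> E k"
          by (auto simp: E_def abs_less_iff)
        then show ?thesis ..
      qed
      then show ?thesis
        by auto
    qed
    moreover have "range E \<subseteq> sets \<mu>"
      by (auto simp: E_def)
    ultimately show ?thesis
      using finite_Lim_measure_decseq[of E] by simp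
  qed
  ultimately have "measure \<mu> (E 0) \<le> 0"
    by (rule incseq_le)
  then have "measure \<mu> (- {-t..1 + t}) = 0"
    by (simp add: E_def measure_le_0_iff)
  then show ?thesis
    by (intro null_setsI) (simp_all add: emeasure_eq_measure)
qed

lemma outside_unit_interval_null: "- {0..1} \<in> null_sets \<mu>"
proof -
  define r :: "nat \<Rightarrow> real" where "r k = inverse (Suc k)" for k
  have r_pos: "0 < r k" for k
    by (simp add: r_def)
  have "- {0..1} = (\<Union>k. - {- r k..1 + r k})"
  proof (intro equalityI subsetI)
    fix y :: real assume "y \<in> - {0..1}"
    then have "0 < - y \<or> 0 < y - 1"
      by auto
    then obtain k where "r k < - y \<or> r k < y - 1"
      unfolding r_def using reals_Archimedean by blast
    then have "y \<notin> {- r k..1 + r k}"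
      by auto
    then show "y \<in> (\<Union>k. - {- r k..1 + r k})"
      by blast
  next
    fix y :: real assume "y \<in> (\<Union>k. - {- r k..1 + r k})"
    then obtain k where "y \<notin> {- r k..1 + r k}"
      by blast
    with r_pos[of k] show "y \<in> - {0..1}"
      by auto
  qed
  also have "\<dots> \<in> null_sets \<mu>"
    using r_pos by (intro null_sets_UN exterior_null)
  finally show ?thesis .
qed

lemma measure_inter_unit_interval:
  assumes "A \<in> sets borel"
  shows "measure \<mu> (A \<inter> {0..1}) = measure \<mu> A"
proof -
  have "A \<inter> {0..1} = A - (- {0..1})"
    by blast
  then show ?thesis
    using measure_Diff_null_set[OF _ outside_unit_interval_null] assms by simp
qed

lemma measure_unit_interval: "measure \<mu> {0..1} = 1"
  using measure_inter_unit_interval[of UNIV] prob_space by simp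

lemma measure_self_similar_unit_interval:
  assumes "A \<in> sets borel"
  shows "measure \<mu> A =
    (\<Sum>d\<in>digit_set N b. measure \<mu> (phi N d -` A \<inter> {0..1})) / digit_norm N b"
proof -
  have "measure \<mu> (phi N d -` A \<inter> {0..1}) = measure \<mu> (phi N d -` A)" for d
    using assms by (intro measure_inter_unit_interval measurable_sets_borel[OF measurable_phi])
  then show ?thesis
    using measure_self_similar[OF assms] by simp
qed

lemma measure_singleton_0: "measure \<mu> {0} = 0"
proof -
  have preimage: "phi N d -` {0} \<inter> {0..1} = (if d = 0 then {0} else {})" for d
    using N_ge_2 by (auto simp: phi_def)
  have "measure \<mu> {0} =
      (\<Sum>d\<in>digit_set N b. measure \<mu> (phi N d -` {0} \<inter> {0..1})) / digit_norm N b"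
    by (rule measure_self_similar_unit_interval) simp
  also have "(\<Sum>d\<in>digit_set N b. measure \<mu> (phi N d -` {0} \<inter> {0..1})) =
      (\<Sum>d\<in>digit_set N b. if d = 0 then measure \<mu> {0} else 0)"
    by (intro sum.cong) (simp_all add: preimage)
  also have "(\<Sum>d\<in>digit_set N b. if d = 0 then measure \<mu> {0} else 0) / digit_norm N b
      \<le> measure \<mu> {0} / digit_norm N b"
    by (intro divide_right_mono) simp_all
  finally have "measure \<mu> {0} * digit_norm N b \<le> measure \<mu> {0}"
    using digit_norm_ge_2 by (simp add: le_divide_eq)
  moreover have "measure \<mu> {0} * 2 \<le> measure \<mu> {0} * digit_norm N b"
    using digit_norm_ge_2 by (intro mult_left_mono) simp_all
  ultimately show ?thesis
    by (simp add: measure_le_0_iff[symmetric])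
qed

lemma cdf_digit_shift:
  fixes y :: real
  assumes "a < N" "0 \<le> y" "y \<le> 1"
  shows "cdf_of \<mu> ((a + y) / N) = (cum_digit b a + b a * cdf_of \<mu> y) / digit_norm N b"
proof -
  have summand: "measure \<mu> (phi N d -` {0..(a + y) / N} \<inter> {0..1})
      = of_bool (d < a) + (if d = a then cdf_of \<mu> y else 0)" for d
  proof -
    have preimage: "phi N d -` {0..(a + y) / N} = {- real d..a + y - d}"
      using N_ge_2 by (auto simp: phi_def divide_le_cancel zero_le_divide_iff)
    consider "d < a" | "d = a" | "a < d" by linarith
    then show ?thesis
    proof cases
      case 1
      then have "{- real d..a + y - d} \<inter> {0..1} = {0..1}" using assms by auto
      with 1 show ?thesis unfolding preimage using measure_unit_interval by simp
    next
      case 2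
      then have "{- real d..a + y - d} \<inter> {0..1} = {0..y}" using assms by auto
      with 2 assms show ?thesis unfolding preimage by (simp add: cdf_of_def)
    next
      case 3
      then have "{- real d..a + y - d} \<inter> {0..1} \<subseteq> {0}" using assms by auto
      then have "measure \<mu> ({- real d..a + y - d} \<inter> {0..1}) \<le> measure \<mu> {0}"
        by (intro finite_measure_mono) auto
      with 3 show ?thesis unfolding preimage using measure_singleton_0 by (simp add: measure_le_0_iff)
    qed
  qed
  have "cdf_of \<mu> ((a + y) / N) =
      (\<Sum>d\<in>digit_set N b. measure \<mu> (phi N d -` {0..(a + y) / N} \<inter> {0..1})) / digit_norm N b"
    unfolding cdf_of_def by (rule measure_self_similar_unit_interval) simp
  also have "(\<Sum>d\<in>digit_set N b. measure \<mu> (phi N d -` {0..(a + y) / N} \<inter> {0..1})) =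
      (\<Sum>d\<in>digit_set N b. of_bool (d < a)) + (\<Sum>d\<in>digit_set N b. if d = a then cdf_of \<mu> y else 0)"
    by (simp add: summand sum.distrib)
  also have "(\<Sum>d\<in>digit_set N b. of_bool (d < a)) = real (cum_digit b a)"
    using assms(1) by (simp add: cum_digit_eq_card lessThan_def)
  also have "(\<Sum>d\<in>digit_set N b. if d = a then cdf_of \<mu> y else 0) = b a * cdf_of \<mu> y"
    using assms(1) by (simp add: digit_eq_of_bool)
  finally show ?thesis .
qed

end

definition radix_value :: "nat \<Rightarrow> (nat \<Rightarrow> nat) \<Rightarrow> real" where
  "radix_value N n = (\<Sum>i. real (n (i + 1)) / real N ^ (i + 1))"

lemma sums_radix_max_digit:
  assumes "1 < N"
  shows "(\<lambda>i. (real N - 1) / real N ^ (i + 1)) sums 1"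
proof -
  have "(\<lambda>i. (1 / real N) ^ i) sums (1 / (1 - 1 / real N))"
    using assms by (intro geometric_sums) simp
  then have "(\<lambda>i. (real N - 1) / real N * (1 / real N) ^ i) sums
      ((real N - 1) / real N * (1 / (1 - 1 / real N)))"
    by (rule sums_mult)
  moreover have "(real N - 1) / real N * (1 / (1 - 1 / real N)) = 1"
    using assms by (simp add: field_simps)
  ultimately show ?thesis
    using assms by (simp add: power_divide)
qed

context
  fixes N :: nat and n :: "nat \<Rightarrow> nat"
  assumes radix_gt_1: "1 < N" and digits_less: "\<And>i. 1 \<le> i \<Longrightarrow> n i < N"
begin

lemma radix_term_le_max_digit:
  "real (n (i + 1)) / real N ^ (i + 1) \<le> (real N - 1) / real N ^ (i + 1)"
proof -
  have "n (i + 1) < N"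
    by (rule digits_less) simp
  then have "real (n (i + 1)) \<le> real N - 1"
    by linarith
  then show ?thesis
    by (intro divide_right_mono) simp_all
qed

lemma summable_radix: "summable (\<lambda>i. real (n (i + 1)) / real N ^ (i + 1))"
  by (rule summable_comparison_test'[OF sums_summable[OF sums_radix_max_digit[OF radix_gt_1]]])
    (use radix_term_le_max_digit in simp)

lemma radix_value_nonneg: "0 \<le> radix_value N n"
  unfolding radix_value_def by (intro suminf_nonneg summable_radix) simp

lemma radix_value_le_1: "radix_value N n \<le> 1"
proof -
  have "radix_value N n \<le> (\<Sum>i. (real N - 1) / real N ^ (i + 1))"
    unfolding radix_value_def
    by (intro suminf_le radix_term_le_max_digit summable_radix
        sums_summable[OF sums_radix_max_digit[OF radix_gt_1]])
  also have "\<dots> = 1"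
    using sums_radix_max_digit[OF radix_gt_1] by (rule sums_unique[symmetric])
  finally show ?thesis .
qed

lemma radix_value_shift: "radix_value N n = (n 1 + radix_value N (\<lambda>i. n (i + 1))) / N"
proof -
  define f where "f = (\<lambda>i. real (n (i + 1)) / real N ^ (i + 1))"
  have summable_f: "summable f"
    unfolding f_def by (rule summable_radix)
  have shifted: "(\<lambda>i. real (n (i + 1 + 1)) / real N ^ (i + 1)) = (\<lambda>i. N * f (Suc i))"
    using radix_gt_1 by (auto simp: f_def)
  have "radix_value N (\<lambda>i. n (i + 1)) = (\<Sum>i. N * f (Suc i))"
    unfolding radix_value_def shifted ..
  also have "\<dots> = N * (\<Sum>i. f (Suc i))"
    using summable_f by (intro suminf_mult) (simp add: summable_Suc_iff)
  also have "(\<Sum>i. f (Suc i)) = radix_value N n - n 1 / N"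
    using suminf_split_head[OF summable_f] by (simp add: f_def radix_value_def)
  finally have "radix_value N (\<lambda>i. n (i + 1)) = N * radix_value N n - n 1"
    using radix_gt_1 by (simp add: right_diff_distrib)
  then show ?thesis
    using radix_gt_1 by (simp add: field_simps)
qed

end

lemma sums_iterated_affine_recursion:
  fixes u c \<beta> :: "nat \<Rightarrow> real" and m B :: real
  assumes "1 < m"
    and recursion: "\<And>k. u k = (c (k + 1) + \<beta> (k + 1) * u (k + 1)) / m"
    and \<beta>_bound: "\<And>k. \<bar>\<beta> (k + 1)\<bar> \<le> 1"
    and u_bound: "\<And>k. \<bar>u k\<bar> \<le> B"
  shows "(\<lambda>i. (\<Prod>k=1..i. \<beta> k) * c (i + 1) / m ^ (i + 1)) sums u 0"
proof -
  define P where "P i = (\<Prod>k=1..i. \<beta> k)" for i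
  have partial_sums: "u 0 = (\<Sum>i<K. P i * c (i + 1) / m ^ (i + 1)) + P K * u K / m ^ K" for K
  proof (induction K)
    case 0
    show ?case by (simp add: P_def)
  next
    case (Suc K)
    have "P (Suc K) = P K * \<beta> (K + 1)"
      by (simp add: P_def prod.nat_ivl_Suc')
    then show ?case
      using Suc.IH recursion[of K] assms(1) by (simp add: field_simps)
  qed
  have P_bound: "\<bar>P K\<bar> \<le> 1" for K
  proof -
    have "\<bar>P K\<bar> = (\<Prod>k=1..K. \<bar>\<beta> k\<bar>)"
      unfolding P_def using prod_norm[of \<beta>] by simp
    also have "\<dots> \<le> 1"
    proof (intro prod_le_1 conjI abs_ge_zero)
      fix k assume "k \<in> {1..K}"
      then show "\<bar>\<beta> k\<bar> \<le> 1"
        using \<beta>_bound[of "k - 1"] by simp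
    qed
    finally show ?thesis .
  qed
  have remainder_bound: "norm (P K * u K / m ^ K) \<le> B * (1 / m) ^ K" for K
  proof -
    have "\<bar>P K\<bar> * \<bar>u K\<bar> \<le> 1 * B"
      using P_bound u_bound by (intro mult_mono) simp_all
    then show ?thesis
      using assms(1) by (simp add: abs_mult power_one_over divide_right_mono)
  qed
  have "(\<lambda>K. B * (1 / m) ^ K) \<longlonglongrightarrow> 0"
    using assms(1) by (intro tendsto_mult_right_zero LIMSEQ_power_zero) simp
  then have "(\<lambda>K. P K * u K / m ^ K) \<longlonglongrightarrow> 0"
    by (rule Lim_null_comparison[OF always_eventually[OF allI[OF remainder_bound]]])
  then have "(\<lambda>K. u 0 - P K * u K / m ^ K) \<longlonglongrightarrow> u 0 - 0"
    by (intro tendsto_diff tendsto_const)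
  moreover have "(\<Sum>i<K. P i * c (i + 1) / m ^ (i + 1)) = u 0 - P K * u K / m ^ K" for K
    using partial_sums[of K] by simp
  ultimately have "(\<lambda>i. P i * c (i + 1) / m ^ (i + 1)) sums u 0"
    by (simp add: sums_def)
  then show ?thesis
    by (simp add: P_def)
qed

lemma (in binary_self_similar_measure) sums_cdf_radix_value:
  assumes digits_less: "\<And>i. 1 \<le> i \<Longrightarrow> n i < N"
  shows "(\<lambda>i. (\<Prod>k=1..i. real (b (n k))) * real (cum_digit b (n (i + 1)))
      / real (digit_norm N b) ^ (i + 1)) sums cdf_of \<mu> (radix_value N n)"
proof -
  define t where "t k = radix_value N (\<lambda>i. n (i + k))" for k
  have radix: "1 < N"
    using N_ge_2 by simp
  have digits: "\<And>i. 1 \<le> i \<Longrightarrow> n (i + k) < N" for k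
    using digits_less by simp
  have t_nonneg: "0 \<le> t k" and t_le_1: "t k \<le> 1" for k
    using radix_value_nonneg[where n = "\<lambda>i. n (i + k)", OF radix digits]
      radix_value_le_1[where n = "\<lambda>i. n (i + k)", OF radix digits]
    by (simp_all add: t_def)
  have t_shift: "t k = (n (k + 1) + t (k + 1)) / N" for k
    using radix_value_shift[where n = "\<lambda>i. n (i + k)", OF radix digits] by (simp add: t_def ac_simps)
  have "(\<lambda>i. (\<Prod>k=1..i. real (b (n k))) * real (cum_digit b (n (i + 1)))
      / real (digit_norm N b) ^ (i + 1)) sums cdf_of \<mu> (t 0)"
  proof (rule sums_iterated_affine_recursion[where u = "\<lambda>k. cdf_of \<mu> (t k)" and B = 1])
    show "1 < real (digit_norm N b)"
      using digit_norm_ge_2 by simp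
    show "cdf_of \<mu> (t k) = (real (cum_digit b (n (k + 1)))
        + real (b (n (k + 1))) * cdf_of \<mu> (t (k + 1))) / real (digit_norm N b)" for k
    proof -
      have "n (k + 1) < N"
        using digits_less by simp
      then show ?thesis
        unfolding t_shift[of k] using t_nonneg t_le_1 by (rule cdf_digit_shift)
    qed
    show "\<bar>real (b (n (k + 1)))\<bar> \<le> 1" for k
      using binary_digits[of "n (k + 1)"] digits_less[of "k + 1"] by auto
    show "\<bar>cdf_of \<mu> (t k)\<bar> \<le> 1" for k
      using measure_nonneg[of \<mu>] prob_le_1 by (simp add: cdf_of_def)
  qed
  then show ?thesis
    by (simp add: t_def)
qed

theorem proposition2p3:
  fixes N :: nat and b :: "nat \<Rightarrow> nat" and \<mu> :: "real measure"
    and x :: real and n :: "nat \<Rightarrow> nat"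
  assumes "digit_vector N b"
    and "self_similar_measure N b \<mu>"
    and "0 < x" and "x < 1"
    and "\<And>i. 1 \<le> i \<Longrightarrow> n i < N"
    and "x = (\<Sum>i. real (n (i + 1)) / real N ^ (i + 1))"
  shows "cdf_of \<mu> x =
    (\<Sum>i. (\<Prod>k=1..i. real (b (n k))) * real (cum_digit b (n (i + 1)))
            / real (digit_norm N b) ^ (i + 1))"
proof -
  interpret binary_self_similar_measure N b \<mu>
    using assms(1,2) by unfold_locales (auto simp: digit_vector_def digit_norm_def)
  show ?thesis
    using sums_cdf_radix_value[where n = n, OF assms(5)] assms(6) by (simp add: radix_value_def sums_unique)
qed

end
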